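(* Let $R$ be a non-associative ring with pairwise commuting additive bijections $\sigma_1,\ldots,\sigma_n$ respecting $1$. If $R$ is left (right) Noetherian, then so is $R[X_1^\pm,\ldots,X_n^\pm;\sigma_1,\ldots,\sigma_n]$.
   Context: All rings are unital; a non-associative ring is a ring that is not necessarily associative. Left (right) Noetherian means satisfying the ascending chain condition on left (right) ideals. For a non-associative ring $R$ and an additive bijection $\sigma$ of $R$ with $\sigma(1)=1$, the non-associative skew Laurent polynomial ring $R[X^\pm;\sigma]$ is the additive group of finite formal sums $\sum_{i\in\mathbb{Z}} r_iX^i$ ($r_i\in R$) with multiplication given by the biadditive extension of $(rX^m)(sX^n)=(r\sigma^m(s))X^{m+n}$ for $r,s\in R$, $m,n\in\mathbb{Z}$. Given pairwise commuting additive bijections $\sigma_1,\ldots,\sigma_n$ of $R$ respecting $1$, the iterated ring $R[X_1^\pm,\ldots,X_n^\pm;\sigma_1,\ldots,\sigma_n]$ is constructed as follows: set $S_1 := R[X_1^\pm;\sigma_1]$; once $S_i$ is constructed for $i<n$, set $S_{i+1}:=S_i[X_{i+1}^\pm;\widehat{\sigma}_{i+1}]$, where $\widehat{\sigma}_{i+1}$ is the additive bijection on $S_i$ (respecting $1$) defined by $\widehat{\sigma}_{i+1}(rX_1^{m_1}\cdots X_i^{m_i})=\sigma_{i+1}(r)X_1^{m_1}\cdots X_i^{m_i}$. The resulting ring $S_n = R[X_1^\pm;\sigma_1]\cdots[X_n^\pm;\widehat{\sigma}_n]$ is denoted $R[X_1^\pm,\ldots,X_n^\pm;\sigma_1,\ldots,\sigma_n]$.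 *)

theory Defs
  imports Main "HOL-Library.Function_Algebras"
begin

definition nonassoc_ring :: "('a::ab_group_add \<Rightarrow> 'a \<Rightarrow> 'a) \<Rightarrow> 'a \<Rightarrow> bool" where
  "nonassoc_ring m one \<longleftrightarrow>
     (\<forall>x y z. m x (y + z) = m x y + m x z) \<and>
     (\<forall>x y z. m (x + y) z = m x z + m y z) \<and>
     (\<forall>x. m one x = x \<and> m x one = x)"

definition additive :: "('a::ab_group_add \<Rightarrow> 'a) \<Rightarrow> bool" where
  "additive s \<longleftrightarrow> (\<forall>x y. s (x + y) = s x + s y)"

definition left_ideal :: "'b::ab_group_add set \<Rightarrow> ('b \<Rightarrow> 'b \<Rightarrow> 'b) \<Rightarrow> 'b set \<Rightarrow> bool" where
  "left_ideal C m I \<longleftrightarrow> I \<subseteq> C \<and> 0 \<in> I \<and> (\<forall>x\<in>I. \<forall>y\<in>I. x + y \<in> I) \<and>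
     (\<forall>x\<in>I. - x \<in> I) \<and> (\<forall>r\<in>C. \<forall>x\<in>I. m r x \<in> I)"

definition right_ideal :: "'b::ab_group_add set \<Rightarrow> ('b \<Rightarrow> 'b \<Rightarrow> 'b) \<Rightarrow> 'b set \<Rightarrow> bool" where
  "right_ideal C m I \<longleftrightarrow> I \<subseteq> C \<and> 0 \<in> I \<and> (\<forall>x\<in>I. \<forall>y\<in>I. x + y \<in> I) \<and>
     (\<forall>x\<in>I. - x \<in> I) \<and> (\<forall>r\<in>C. \<forall>x\<in>I. m x r \<in> I)"

definition left_noetherian :: "'b::ab_group_add set \<Rightarrow> ('b \<Rightarrow> 'b \<Rightarrow> 'b) \<Rightarrow> bool" where
  "left_noetherian C m \<longleftrightarrow>
     (\<forall>I :: nat \<Rightarrow> 'b set. (\<forall>k. left_ideal C m (I k)) \<and> (\<forall>k. I k \<subseteq> I (Suc k)) \<longrightarrow>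
        (\<exists>N. \<forall>k\<ge>N. I k = I N))"

definition right_noetherian :: "'b::ab_group_add set \<Rightarrow> ('b \<Rightarrow> 'b \<Rightarrow> 'b) \<Rightarrow> bool" where
  "right_noetherian C m \<longleftrightarrow>
     (\<forall>I :: nat \<Rightarrow> 'b set. (\<forall>k. right_ideal C m (I k)) \<and> (\<forall>k. I k \<subseteq> I (Suc k)) \<longrightarrow>
        (\<exists>N. \<forall>k\<ge>N. I k = I N))"

definition zpow :: "('b \<Rightarrow> 'b) \<Rightarrow> int \<Rightarrow> 'b \<Rightarrow> 'b" where
  "zpow s j = (if 0 \<le> j then s ^^ nat j else inv s ^^ nat (- j))"

text \<open>Elements of B[X^\<pm>;s] are finitely supported functions int => B (coefficient of X^j).
  Multiplication is the biadditive extension of (b X^j)(c X^k) = (b s^j(c)) X^(j+k).\<close>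
definition skl_mult :: "('b::comm_monoid_add \<Rightarrow> 'b \<Rightarrow> 'b) \<Rightarrow> ('b \<Rightarrow> 'b) \<Rightarrow>
    (int \<Rightarrow> 'b) \<Rightarrow> (int \<Rightarrow> 'b) \<Rightarrow> (int \<Rightarrow> 'b)" where
  "skl_mult m s f g = (\<lambda>l. \<Sum>(j, k) \<in> {(j, k). f j \<noteq> 0 \<and> g k \<noteq> 0 \<and> j + k = l}.
                              m (f j) (zpow s j (g k)))"

text \<open>An element of S_i is a finitely supported function on exponent lists [m_1,...,m_i]
  (the coefficient of X_1^m_1 ... X_i^m_i); S_0 = R via the empty list.\<close>
definition lcarrier :: "nat \<Rightarrow> (int list \<Rightarrow> 'a::zero) set" where
  "lcarrier i = {F. finite {xs. F xs \<noteq> 0} \<and> (\<forall>xs. F xs \<noteq> 0 \<longrightarrow> length xs = i)}"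

text \<open>Viewing an element of S_(i+1) as a Laurent polynomial in X_(i+1) over S_i, and back.\<close>
definition ldec :: "nat \<Rightarrow> (int list \<Rightarrow> 'a::zero) \<Rightarrow> int \<Rightarrow> (int list \<Rightarrow> 'a)" where
  "ldec i F = (\<lambda>j xs. if length xs = i then F (xs @ [j]) else 0)"

definition lenc :: "nat \<Rightarrow> (int \<Rightarrow> (int list \<Rightarrow> 'a::zero)) \<Rightarrow> (int list \<Rightarrow> 'a)" where
  "lenc i H = (\<lambda>ys. if length ys = Suc i then H (last ys) (butlast ys) else 0)"

definition lhat :: "('a \<Rightarrow> 'a) \<Rightarrow> (int list \<Rightarrow> 'a) \<Rightarrow> (int list \<Rightarrow> 'a)" where
  "lhat s h = (\<lambda>xs. s (h xs))"

text \<open>Multiplication of S_i = R[X_1^\<pm>,...,X_i^\<pm>; sigma 0, ..., sigma (i-1)];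
  the variable X_(i+1) uses the bijection sigma i.\<close>
fun lmult :: "('a::ab_group_add \<Rightarrow> 'a \<Rightarrow> 'a) \<Rightarrow> (nat \<Rightarrow> 'a \<Rightarrow> 'a) \<Rightarrow> nat \<Rightarrow>
    (int list \<Rightarrow> 'a) \<Rightarrow> (int list \<Rightarrow> 'a) \<Rightarrow> (int list \<Rightarrow> 'a)" where
  "lmult m \<sigma> 0 = (\<lambda>F G xs. if xs = [] then m (F []) (G []) else 0)"
| "lmult m \<sigma> (Suc i) =
     (\<lambda>F G. lenc i (skl_mult (lmult m \<sigma> i) (lhat (\<sigma> i)) (ldec i F) (ldec i G)))"

end

(* For a left ideal I of R[X^\<pm>; s] and d \<ge> 0, the coefficients at X^0 of the elements of I
   supported in degrees 0..d form a left ideal of R, increasing in I and in d.  Two nested ideals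
   with the same coefficient ideals coincide: subtracting an element with the same coefficient at
   X^0 and multiplying by X^-1 shortens the support.  So an ascending chain of ideals of
   R[X^\<pm>; s] stabilises as soon as the doubly indexed family of coefficient ideals does, and a
   diagonal argument gets this from the ascending chain condition in R.  Right ideals are treated
   alike, with right multiplication by X^k.  As S_(i+1) is by construction a skew Laurent ring
   over S_i, induction on the number of variables finishes the proof. *)

theory Submission
  imports Defs
begin

definition ascending_chain_condition :: "('b set \<Rightarrow> bool) \<Rightarrow> bool" where
  "ascending_chain_condition P \<longleftrightarrow>
     (\<forall>I :: nat \<Rightarrow> 'b set. (\<forall>k. P (I k)) \<and> (\<forall>k. I k \<subseteq> I (Suc k)) \<longrightarrow>
        (\<exists>N. \<forall>k\<ge>N. I k = I N))"

lemma ascending_chain_conditionI: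
  assumes "\<And>I. (\<And>k. P (I k)) \<Longrightarrow> (\<And>k. I k \<subseteq> I (Suc k)) \<Longrightarrow> \<exists>N. \<forall>k\<ge>N. I k = I N"
  shows "ascending_chain_condition P"
  using assms unfolding ascending_chain_condition_def by blast

lemma ascending_chain_conditionE:
  assumes "ascending_chain_condition P" "\<And>k. P (I k)" "\<And>k. I k \<subseteq> I (Suc k)"
  obtains N where "\<And>k. N \<le> k \<Longrightarrow> I k = I N"
  using assms unfolding ascending_chain_condition_def by blast

lemma left_noetherian_iff_ascending_chain_condition:
  "left_noetherian C m \<longleftrightarrow> ascending_chain_condition (left_ideal C m)"
  by (simp add: left_noetherian_def ascending_chain_condition_def)

lemma right_noetherian_iff_ascending_chain_condition:
  "right_noetherian C m \<longleftrightarrow> ascending_chain_condition (right_ideal C m)"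
  by (simp add: right_noetherian_def ascending_chain_condition_def)

lemma right_ideal_eq_left_ideal_flip: "right_ideal C m = left_ideal C (\<lambda>x y. m y x)"
  by (simp add: fun_eq_iff right_ideal_def left_ideal_def)

lemma right_noetherian_eq_left_noetherian_flip:
  "right_noetherian C m = left_noetherian C (\<lambda>x y. m y x)"
  by (simp add: right_noetherian_def left_noetherian_def right_ideal_eq_left_ideal_flip)

lemma ascending_chain_condition_inj_image:
  assumes acc: "ascending_chain_condition Q" and inj: "inj_on \<phi> C"
    and sub: "\<And>I. P I \<Longrightarrow> I \<subseteq> C" and image: "\<And>I. P I \<Longrightarrow> Q (\<phi> ` I)"
  shows "ascending_chain_condition P"
proof (rule ascending_chain_conditionI)
  fix I assume P: "\<And>k. P (I k)" and chain: "\<And>k. I k \<subseteq> I (Suc k)"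
  obtain N where "\<And>k. N \<le> k \<Longrightarrow> \<phi> ` I k = \<phi> ` I N"
    using ascending_chain_conditionE[OF acc, of "\<lambda>k. \<phi> ` I k"] P chain image image_mono
    by metis
  then show "\<exists>N. \<forall>k\<ge>N. I k = I N"
    using inj_on_image_eq_iff[OF inj] sub P by metis
qed

lemma ascending_chain_condition_stabilizes_uniformly:
  fixes A :: "nat \<Rightarrow> nat \<Rightarrow> 'b set"
  assumes acc: "ascending_chain_condition Q" and Q: "\<And>k d. Q (A k d)"
    and mono: "\<And>k k' d d'. k \<le> k' \<Longrightarrow> d \<le> d' \<Longrightarrow> A k d \<subseteq> A k' d'"
  obtains N where "\<And>k d. N \<le> k \<Longrightarrow> A k d = A N d"
proof -
  obtain D where D: "\<And>k. D \<le> k \<Longrightarrow> A k k = A D D"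
  proof (rule ascending_chain_conditionE[OF acc, of "\<lambda>k. A k k"])
    show "A k k \<subseteq> A (Suc k) (Suc k)" for k by (rule mono) auto
  qed (use Q in auto)
  have "\<exists>N. \<forall>k\<ge>N. A k d = A N d" for d
  proof (rule ascending_chain_conditionE[OF acc, of "\<lambda>k. A k d"])
    show "A k d \<subseteq> A (Suc k) d" for k by (rule mono) auto
  qed (use Q in auto)
  then obtain col where col: "\<And>d k. col d \<le> k \<Longrightarrow> A k d = A (col d) d"
    by metis
  define N where "N = max D (Max (col ` {..D}))"
  have "A k d = A N d" if "N \<le> k" for k d
  proof (cases "d \<le> D")
    case True
    then have "col d \<le> N"
      by (auto simp: N_def le_max_iff_disj)
    then show ?thesis
      using col that by (metis order_trans)
  next
    case False
    \<comment> \<open>beyond the diagonal index D, column d is squeezed between A N d and A D D\<close>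
    have "A k d \<subseteq> A (max d k) (max d k)" by (rule mono) simp_all
    also have "\<dots> = A D D" using False by (intro D) simp
    also have "\<dots> \<subseteq> A N d" using False by (intro mono) (auto simp: N_def)
    finally show ?thesis using mono[OF that order_refl] by (rule subset_antisym)
  qed
  then show ?thesis by (rule that)
qed

definition additive_subgroup :: "'b::ab_group_add set \<Rightarrow> 'b set \<Rightarrow> bool" where
  "additive_subgroup C I \<longleftrightarrow>
     I \<subseteq> C \<and> 0 \<in> I \<and> (\<forall>x\<in>I. \<forall>y\<in>I. x + y \<in> I) \<and> (\<forall>x\<in>I. - x \<in> I)"

lemma left_ideal_iff: "left_ideal C m I \<longleftrightarrow> additive_subgroup C I \<and> (\<forall>r\<in>C. \<forall>x\<in>I. m r x \<in> I)"
  by (auto simp: left_ideal_def additive_subgroup_def)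

lemma right_ideal_iff: "right_ideal C m I \<longleftrightarrow> additive_subgroup C I \<and> (\<forall>r\<in>C. \<forall>x\<in>I. m x r \<in> I)"
  by (auto simp: right_ideal_def additive_subgroup_def)

lemma additive_subgroup_diff: "additive_subgroup C I \<Longrightarrow> x \<in> I \<Longrightarrow> y \<in> I \<Longrightarrow> x - y \<in> I"
  unfolding additive_subgroup_def by (metis diff_conv_add_uminus)

definition laurent_carrier :: "'b::zero set \<Rightarrow> (int \<Rightarrow> 'b) set" where
  "laurent_carrier C = {f. finite {j. f j \<noteq> 0} \<and> (\<forall>j. f j \<in> C)}"

definition laurent_monom :: "int \<Rightarrow> 'b::zero \<Rightarrow> int \<Rightarrow> 'b" where
  "laurent_monom k a = (\<lambda>l. if l = k then a else 0)"

lemma laurent_monom_mem: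
  assumes "0 \<in> C" "a \<in> C"
  shows "laurent_monom k a \<in> laurent_carrier C"
proof -
  have "{j. laurent_monom k a j \<noteq> 0} \<subseteq> {k}"
    by (auto simp: laurent_monom_def)
  then have "finite {j. laurent_monom k a j \<noteq> 0}"
    using finite_subset by blast
  then show ?thesis
    using assms by (simp add: laurent_carrier_def laurent_monom_def)
qed

lemma eq_zero_if_support_subset: "{j. p j \<noteq> 0} \<subseteq> A \<Longrightarrow> j \<notin> A \<Longrightarrow> p j = 0"
  by blast

definition trailing_coeffs :: "(int \<Rightarrow> 'b::zero) set \<Rightarrow> nat \<Rightarrow> 'b set" where
  "trailing_coeffs I d = {p 0 | p. p \<in> I \<and> {j. p j \<noteq> 0} \<subseteq> {0..int d}}"

lemma trailing_coeffs_memI: "p \<in> I \<Longrightarrow> {j. p j \<noteq> 0} \<subseteq> {0..int d} \<Longrightarrow> p 0 \<in> trailing_coeffs I d"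
  unfolding trailing_coeffs_def by blast

lemma trailing_coeffs_mono: "I \<subseteq> J \<Longrightarrow> d \<le> d' \<Longrightarrow> trailing_coeffs I d \<subseteq> trailing_coeffs J d'"
  unfolding trailing_coeffs_def by force

lemma additive_subgroup_trailing_coeffs:
  assumes "additive_subgroup (laurent_carrier C) I"
  shows "additive_subgroup C (trailing_coeffs I d)"
  unfolding additive_subgroup_def
proof (intro conjI ballI)
  show "trailing_coeffs I d \<subseteq> C"
    using assms by (auto simp: trailing_coeffs_def additive_subgroup_def laurent_carrier_def)
  show "0 \<in> trailing_coeffs I d"
    using assms unfolding trailing_coeffs_def additive_subgroup_def
    by (auto intro!: exI[of _ 0])
next
  fix x y assume "x \<in> trailing_coeffs I d" "y \<in> trailing_coeffs I d"
  then obtain p q where "p \<in> I" "q \<in> I" "x = p 0" "y = q 0"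
    "{j. p j \<noteq> 0} \<subseteq> {0..int d}" "{j. q j \<noteq> 0} \<subseteq> {0..int d}"
    unfolding trailing_coeffs_def by blast
  moreover have "{j. (p + q) j \<noteq> 0} \<subseteq> {j. p j \<noteq> 0} \<union> {j. q j \<noteq> 0}" by auto
  ultimately show "x + y \<in> trailing_coeffs I d"
    using assms unfolding trailing_coeffs_def additive_subgroup_def
    by (auto intro!: exI[of _ "p + q"])
next
  fix x assume "x \<in> trailing_coeffs I d"
  then obtain p where "p \<in> I" "x = p 0" "{j. p j \<noteq> 0} \<subseteq> {0..int d}"
    unfolding trailing_coeffs_def by blast
  then show "- x \<in> trailing_coeffs I d"
    using assms unfolding trailing_coeffs_def additive_subgroup_def
    by (auto intro!: exI[of _ "- p"])
qed

text \<open>shift k p is p multiplied by X^k; T k is the induced action on coefficients,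
  namely s^k for multiplication on the left and the identity for multiplication on the right.\<close>
locale laurent_shift =
  fixes T :: "int \<Rightarrow> 'b::ab_group_add \<Rightarrow> 'b"
  assumes T_zero: "T k 0 = 0" and T_inverse: "T (- k) (T k x) = x"
begin

definition shift :: "int \<Rightarrow> (int \<Rightarrow> 'b) \<Rightarrow> int \<Rightarrow> 'b" where
  "shift k p = (\<lambda>l. T k (p (l - k)))"

lemma shift_inverse: "shift (- k) (shift k p) = p"
  by (simp add: shift_def T_inverse)

lemma T_eq_zero_iff: "T k x = 0 \<longleftrightarrow> x = 0"
  by (metis T_zero T_inverse)

lemma shift_eq_zero_iff: "shift k p l = 0 \<longleftrightarrow> p (l - k) = 0"
  by (simp add: shift_def T_eq_zero_iff)

context
  fixes C :: "'b set" and I J :: "(int \<Rightarrow> 'b) set"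
  assumes I: "additive_subgroup (laurent_carrier C) I"
    and J: "additive_subgroup (laurent_carrier C) J"
    and I_shift: "\<And>p k. p \<in> I \<Longrightarrow> shift k p \<in> I"
    and J_shift: "\<And>p k. p \<in> J \<Longrightarrow> shift k p \<in> J"
    and subset: "I \<subseteq> J"
    and trailing: "\<And>d. trailing_coeffs J d \<subseteq> trailing_coeffs I d"
begin

lemma mem_if_support_in_window: "p \<in> J \<Longrightarrow> {j. p j \<noteq> 0} \<subseteq> {0..int w} \<Longrightarrow> p \<in> I"
proof (induction w arbitrary: p)
  case 0
  then have "p 0 \<in> trailing_coeffs I 0"
    using trailing unfolding trailing_coeffs_def by blast
  then obtain q where q: "q \<in> I" "q 0 = p 0" "{j. q j \<noteq> 0} \<subseteq> {0}"
    unfolding trailing_coeffs_def by auto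
  have "p j = q j" for j
    using q eq_zero_if_support_subset[OF "0.prems"(2), of j]
      eq_zero_if_support_subset[OF q(3), of j]
    by (cases "j = 0") auto
  then show ?case using q by (metis ext)
next
  case (Suc w)
  then have "p 0 \<in> trailing_coeffs I (Suc w)"
    using trailing unfolding trailing_coeffs_def by blast
  then obtain q where q: "q \<in> I" "q 0 = p 0" "{j. q j \<noteq> 0} \<subseteq> {0..int (Suc w)}"
    unfolding trailing_coeffs_def by auto
  define r where "r = p - q"
  have "r \<in> J"
    unfolding r_def using additive_subgroup_diff[OF J] Suc.prems q subset by blast
  have "r j = 0" if "j \<notin> {1..int (Suc w)}" for j
    using q that eq_zero_if_support_subset[OF Suc.prems(2), of j]
      eq_zero_if_support_subset[OF q(3), of j]
    by (cases "j = 0") (auto simp: r_def)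
  then have r_support: "{j. r j \<noteq> 0} \<subseteq> {1..int (Suc w)}"
    by blast
  have "{j. shift (- 1) r j \<noteq> 0} \<subseteq> {0..int w}"
  proof
    fix j assume "j \<in> {j. shift (- 1) r j \<noteq> 0}"
    then have "j + 1 \<in> {j. r j \<noteq> 0}" by (simp add: shift_eq_zero_iff)
    with r_support show "j \<in> {0..int w}" by auto
  qed
  then have "shift (- 1) r \<in> I"
    using Suc.IH J_shift \<open>r \<in> J\<close> by blast
  then have "r \<in> I"
    using I_shift[of "shift (- 1) r" 1] shift_inverse[of "- 1" r] by simp
  then show ?case
    using I q unfolding r_def additive_subgroup_def by (metis diff_add_cancel)
qed

lemma eq_if_trailing_coeffs_subset: "I = J"
proof
  show "J \<subseteq> I"
  proof
    fix p assume p: "p \<in> J"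
    define S where "S = {j. p j \<noteq> 0}"
    have "finite S"
      using p J by (auto simp: S_def additive_subgroup_def laurent_carrier_def)
    then obtain lo hi where S: "S \<subseteq> {lo..hi}"
      using bdd_above_finite bdd_below_finite unfolding bdd_above_def bdd_below_def
      by (metis atLeastAtMost_iff subsetI)
    have "{j. shift (- lo) p j \<noteq> 0} \<subseteq> {0..int (nat (hi - lo))}"
    proof
      fix j assume "j \<in> {j. shift (- lo) p j \<noteq> 0}"
      then have "j + lo \<in> S" by (simp add: S_def shift_eq_zero_iff)
      with S show "j \<in> {0..int (nat (hi - lo))}" by auto
    qed
    then have "shift (- lo) p \<in> I"
      using mem_if_support_in_window J_shift p by blast
    then show "p \<in> I"
      using I_shift[of "shift (- lo) p" lo] shift_inverse[of "- lo" p] by simp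
  qed
qed (rule subset)

end

lemma ascending_chain_condition_laurent:
  assumes acc: "ascending_chain_condition Q"
    and subgroup: "\<And>I. P I \<Longrightarrow> additive_subgroup (laurent_carrier C) I"
    and shift_closed: "\<And>I p k. P I \<Longrightarrow> p \<in> I \<Longrightarrow> shift k p \<in> I"
    and trailing: "\<And>I d. P I \<Longrightarrow> Q (trailing_coeffs I d)"
  shows "ascending_chain_condition P"
proof (rule ascending_chain_conditionI)
  fix I assume P: "\<And>k. P (I k)" and chain: "\<And>k. I k \<subseteq> I (Suc k)"
  have mono: "I k \<subseteq> I k'" if "k \<le> k'" for k k'
    using lift_Suc_mono_le[of I, OF chain that] .
  obtain N where N: "\<And>k d. N \<le> k \<Longrightarrow> trailing_coeffs (I k) d = trailing_coeffs (I N) d"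
    using ascending_chain_condition_stabilizes_uniformly[OF acc, of "\<lambda>k d. trailing_coeffs (I k) d"]
      trailing[OF P] trailing_coeffs_mono[OF mono] by blast
  have "I N = I k" if "N \<le> k" for k
    using eq_if_trailing_coeffs_subset[OF subgroup[OF P] subgroup[OF P] shift_closed[OF P]
        shift_closed[OF P] mono[OF that]] N[OF that] by blast
  then show "\<exists>N. \<forall>k\<ge>N. I k = I N" by auto
qed

end

lemma left_ideal_image:
  assumes bij: "bij_betw \<phi> C C'"
    and add: "\<And>x y. x \<in> C \<Longrightarrow> y \<in> C \<Longrightarrow> \<phi> (x + y) = \<phi> x + \<phi> y"
    and mult: "\<And>x y. x \<in> C \<Longrightarrow> y \<in> C \<Longrightarrow> \<phi> (m x y) = m' (\<phi> x) (\<phi> y)"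
    and I: "left_ideal C m I"
  shows "left_ideal C' m' (\<phi> ` I)"
proof -
  have I_sub: "I \<subseteq> C" and I_zero: "0 \<in> I" and I_add: "\<And>x y. x \<in> I \<Longrightarrow> y \<in> I \<Longrightarrow> x + y \<in> I"
    and I_neg: "\<And>x. x \<in> I \<Longrightarrow> - x \<in> I" and I_mult: "\<And>r x. r \<in> C \<Longrightarrow> x \<in> I \<Longrightarrow> m r x \<in> I"
    using I by (auto simp: left_ideal_def)
  have I_C: "x \<in> C" if "x \<in> I" for x
    using I_sub that by blast
  have zero: "\<phi> 0 = 0"
    using add[of 0 0] I_zero I_sub by auto
  have neg: "\<phi> (- x) = - \<phi> x" if "x \<in> I" for x
  proof -
    have "\<phi> x + \<phi> (- x) = 0"
      using add[of x "- x"] zero that I_neg I_sub by auto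
    then show ?thesis by (metis minus_unique)
  qed
  show ?thesis
    unfolding left_ideal_def
  proof (intro conjI ballI)
    show "\<phi> ` I \<subseteq> C'"
      using I_sub bij bij_betw_imp_surj_on by blast
    show "0 \<in> \<phi> ` I"
      using I_zero zero by (metis image_eqI)
  next
    fix a b assume "a \<in> \<phi> ` I" "b \<in> \<phi> ` I"
    then obtain x y where "x \<in> I" "y \<in> I" "a = \<phi> x" "b = \<phi> y" by blast
    then have "a + b = \<phi> (x + y)" "x + y \<in> I"
      using add I_add I_C by auto
    then show "a + b \<in> \<phi> ` I" by blast
  next
    fix a assume "a \<in> \<phi> ` I"
    then obtain x where "x \<in> I" "a = \<phi> x" by blast
    then have "- a = \<phi> (- x)" "- x \<in> I"
      using neg I_neg by auto
    then show "- a \<in> \<phi> ` I" by blast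
  next
    fix r a assume "r \<in> C'" "a \<in> \<phi> ` I"
    then obtain r' x where "r' \<in> C" "r = \<phi> r'" "x \<in> I" "a = \<phi> x"
      using bij by (auto simp: bij_betw_def)
    then have "m' r a = \<phi> (m r' x)" "m r' x \<in> I"
      using mult I_mult I_C by auto
    then show "m' r a \<in> \<phi> ` I" by blast
  qed
qed

lemma left_noetherian_transfer:
  assumes bij: "bij_betw \<phi> C C'"
    and add: "\<And>x y. x \<in> C \<Longrightarrow> y \<in> C \<Longrightarrow> \<phi> (x + y) = \<phi> x + \<phi> y"
    and mult: "\<And>x y. x \<in> C \<Longrightarrow> y \<in> C \<Longrightarrow> \<phi> (m x y) = m' (\<phi> x) (\<phi> y)"
    and noeth: "left_noetherian C' m'"
  shows "left_noetherian C m"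
  unfolding left_noetherian_iff_ascending_chain_condition
proof (rule ascending_chain_condition_inj_image)
  show "ascending_chain_condition (left_ideal C' m')"
    using noeth by (simp add: left_noetherian_iff_ascending_chain_condition)
  show "inj_on \<phi> C"
    using bij by (rule bij_betw_imp_inj_on)
  show "\<And>I. left_ideal C m I \<Longrightarrow> I \<subseteq> C"
    unfolding left_ideal_def by blast
  show "\<And>I. left_ideal C m I \<Longrightarrow> left_ideal C' m' (\<phi> ` I)"
    by (rule left_ideal_image[where m = m and m' = m', OF bij add mult])
qed

lemma right_noetherian_transfer:
  assumes bij: "bij_betw \<phi> C C'"
    and add: "\<And>x y. x \<in> C \<Longrightarrow> y \<in> C \<Longrightarrow> \<phi> (x + y) = \<phi> x + \<phi> y"
    and mult: "\<And>x y. x \<in> C \<Longrightarrow> y \<in> C \<Longrightarrow> \<phi> (m x y) = m' (\<phi> x) (\<phi> y)"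
    and noeth: "right_noetherian C' m'"
  shows "right_noetherian C m"
  using noeth unfolding right_noetherian_eq_left_noetherian_flip
  by (intro left_noetherian_transfer[OF bij add, of "\<lambda>x y. m y x" "\<lambda>x y. m' y x"])
    (simp_all add: mult)

lemma funpow_fixed: "f a = a \<Longrightarrow> (f ^^ n) a = a"
  by (induction n) auto

lemma funpow_mem: "(\<And>x. x \<in> C \<Longrightarrow> f x \<in> C) \<Longrightarrow> x \<in> C \<Longrightarrow> (f ^^ n) x \<in> C"
  by (induction n) auto

lemma zpow_0 [simp]: "zpow s 0 = id"
  by (simp add: zpow_def)

lemma zpow_fixed:
  assumes "bij s" "s a = a"
  shows "zpow s k a = a"
proof -
  have "inv s a = a"
    using assms by (metis bij_is_inj inv_f_f)
  then show ?thesis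
    using assms by (simp add: zpow_def funpow_fixed)
qed

lemma zpow_mem:
  assumes "bij s" "s ` C = C" "x \<in> C"
  shows "zpow s k x \<in> C"
proof -
  have "inv s y \<in> C" if "y \<in> C" for y
    using assms(1,2) that by (metis bij_is_inj image_iff inv_f_f)
  moreover have "s y \<in> C" if "y \<in> C" for y
    using assms(2) that by blast
  ultimately show ?thesis
    using assms(3) by (simp add: zpow_def funpow_mem)
qed

lemma zpow_inverse:
  assumes "bij s"
  shows "zpow s (- k) (zpow s k x) = x"
proof -
  consider "0 \<le> k" "0 \<le> - k" | "0 \<le> k" "\<not> 0 \<le> - k" | "\<not> 0 \<le> k"
    by linarith
  then show ?thesis
    using fun_cong[OF inv_fn_o_fn_is_id[OF assms]] fun_cong[OF fn_o_inv_fn_is_id[OF assms]]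
    by cases (auto simp: zpow_def)
qed

text \<open>No associativity or distributivity: this is all the Noetherian argument uses of
  a non-associative ring.\<close>
locale unital_magma =
  fixes C :: "'b::ab_group_add set" and m :: "'b \<Rightarrow> 'b \<Rightarrow> 'b" and e :: 'b
  assumes zero_mem: "0 \<in> C" and add_mem: "x \<in> C \<Longrightarrow> y \<in> C \<Longrightarrow> x + y \<in> C"
    and mult_mem: "x \<in> C \<Longrightarrow> y \<in> C \<Longrightarrow> m x y \<in> C"
    and mult_zero_left: "m 0 x = 0" and mult_zero_right: "m x 0 = 0"
    and unit_mem: "e \<in> C" and mult_unit_left: "x \<in> C \<Longrightarrow> m e x = x"
    and mult_unit_right: "x \<in> C \<Longrightarrow> m x e = x"
begin

lemma sum_mem: "(\<And>x. x \<in> A \<Longrightarrow> f x \<in> C) \<Longrightarrow> sum f A \<in> C"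
  by (induction A rule: infinite_finite_induct) (auto simp: zero_mem add_mem)

end

locale skew_laurent = unital_magma C m e for C m e +
  fixes s :: "'b::ab_group_add \<Rightarrow> 'b"
  assumes bij_s: "bij s" and s_image: "s ` C = C" and s_zero: "s 0 = 0" and s_unit: "s e = e"
begin

lemma zpow_zero [simp]: "zpow s k 0 = 0"
  using zpow_fixed[OF bij_s s_zero] .

lemma zpow_unit [simp]: "zpow s k e = e"
  using zpow_fixed[OF bij_s s_unit] .

sublocale left: laurent_shift "zpow s"
  by unfold_locales (simp_all add: zpow_inverse[OF bij_s])

sublocale right: laurent_shift "\<lambda>_ x. x"
  by unfold_locales simp_all

lemma skl_mult_monom_left:
  "skl_mult m s (laurent_monom k a) g = (\<lambda>l. m a (zpow s k (g (l - k))))"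
proof
  fix l
  show "skl_mult m s (laurent_monom k a) g l = m a (zpow s k (g (l - k)))"
  proof (cases "a \<noteq> 0 \<and> g (l - k) \<noteq> 0")
    case True
    then have E: "{(j, k'). laurent_monom k a j \<noteq> 0 \<and> g k' \<noteq> 0 \<and> j + k' = l} = {(k, l - k)}"
      by (auto simp: laurent_monom_def split: if_splits)
    show ?thesis unfolding skl_mult_def E by (simp add: laurent_monom_def)
  next
    case False
    then have E: "{(j, k'). laurent_monom k a j \<noteq> 0 \<and> g k' \<noteq> 0 \<and> j + k' = l} = {}"
      by (auto simp: laurent_monom_def)
    show ?thesis
      unfolding skl_mult_def E using False by (auto simp: mult_zero_left mult_zero_right)
  qed
qed

lemma skl_mult_monom_right:
  "skl_mult m s f (laurent_monom k b) = (\<lambda>l. m (f (l - k)) (zpow s (l - k) b))"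
proof
  fix l
  show "skl_mult m s f (laurent_monom k b) l = m (f (l - k)) (zpow s (l - k) b)"
  proof (cases "b \<noteq> 0 \<and> f (l - k) \<noteq> 0")
    case True
    then have E: "{(j, k'). f j \<noteq> 0 \<and> laurent_monom k b k' \<noteq> 0 \<and> j + k' = l} = {(l - k, k)}"
      by (auto simp: laurent_monom_def split: if_splits)
    show ?thesis unfolding skl_mult_def E by (simp add: laurent_monom_def)
  next
    case False
    then have E: "{(j, k'). f j \<noteq> 0 \<and> laurent_monom k b k' \<noteq> 0 \<and> j + k' = l} = {}"
      by (auto simp: laurent_monom_def)
    show ?thesis
      unfolding skl_mult_def E using False by (auto simp: mult_zero_left mult_zero_right)
  qed
qed

lemma skl_mult_mem:
  assumes f: "f \<in> laurent_carrier C" and g: "g \<in> laurent_carrier C"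
  shows "skl_mult m s f g \<in> laurent_carrier C"
proof -
  have "m (f j) (zpow s j (g k)) \<in> C" for j k
    using f g by (simp add: laurent_carrier_def mult_mem zpow_mem[OF bij_s s_image])
  then have coeff_mem: "skl_mult m s f g l \<in> C" for l
    unfolding skl_mult_def by (intro sum_mem) auto
  have "{l. skl_mult m s f g l \<noteq> 0} \<subseteq> (\<lambda>(j, k). j + k) ` ({j. f j \<noteq> 0} \<times> {k. g k \<noteq> 0})"
  proof
    fix l assume "l \<in> {l. skl_mult m s f g l \<noteq> 0}"
    then have "(\<Sum>(j, k) \<in> {(j, k). f j \<noteq> 0 \<and> g k \<noteq> 0 \<and> j + k = l}.
        m (f j) (zpow s j (g k))) \<noteq> 0"
      by (simp add: skl_mult_def)
    then obtain jk where "jk \<in> {(j, k). f j \<noteq> 0 \<and> g k \<noteq> 0 \<and> j + k = l}"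
      by (rule sum.not_neutral_contains_not_neutral)
    then show "l \<in> (\<lambda>(j, k). j + k) ` ({j. f j \<noteq> 0} \<times> {k. g k \<noteq> 0})"
      by auto
  qed
  moreover have "finite ((\<lambda>(j, k). j + k) ` ({j. f j \<noteq> 0} \<times> {k. g k \<noteq> 0}))"
    using f g by (simp add: laurent_carrier_def)
  ultimately have "finite {l. skl_mult m s f g l \<noteq> 0}"
    by (rule finite_subset)
  with coeff_mem show ?thesis
    by (simp add: laurent_carrier_def)
qed

lemma unital_magma_laurent: "unital_magma (laurent_carrier C) (skl_mult m s) (laurent_monom 0 e)"
proof
  show "0 \<in> laurent_carrier C"
    by (simp add: laurent_carrier_def zero_mem)
  show "laurent_monom 0 e \<in> laurent_carrier C"
    by (rule laurent_monom_mem[OF zero_mem unit_mem])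
  show "skl_mult m s 0 f = 0" "skl_mult m s f 0 = 0" for f
    by (simp_all add: skl_mult_def fun_eq_iff)
next
  fix f g assume f: "f \<in> laurent_carrier C" and g: "g \<in> laurent_carrier C"
  have "{j. (f + g) j \<noteq> 0} \<subseteq> {j. f j \<noteq> 0} \<union> {j. g j \<noteq> 0}" by auto
  then show "f + g \<in> laurent_carrier C"
    using f g by (auto simp: laurent_carrier_def add_mem intro: finite_subset)
  show "skl_mult m s f g \<in> laurent_carrier C"
    using f g by (rule skl_mult_mem)
next
  fix f assume "f \<in> laurent_carrier C"
  then have "f l \<in> C" for l
    by (simp add: laurent_carrier_def)
  then show "skl_mult m s (laurent_monom 0 e) f = f" "skl_mult m s f (laurent_monom 0 e) = f"
    by (simp_all add: skl_mult_monom_left skl_mult_monom_right mult_unit_left mult_unit_right)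
qed

lemma left_shift_eq_skl_mult:
  "f \<in> laurent_carrier C \<Longrightarrow> left.shift k f = skl_mult m s (laurent_monom k e) f"
  by (simp add: skl_mult_monom_left left.shift_def fun_eq_iff laurent_carrier_def
      mult_unit_left zpow_mem[OF bij_s s_image])

lemma right_shift_eq_skl_mult:
  "f \<in> laurent_carrier C \<Longrightarrow> right.shift k f = skl_mult m s f (laurent_monom k e)"
  by (simp add: skl_mult_monom_right right.shift_def fun_eq_iff laurent_carrier_def
      mult_unit_right)

lemma left_ideal_trailing_coeffs:
  assumes I: "left_ideal (laurent_carrier C) (skl_mult m s) I"
  shows "left_ideal C m (trailing_coeffs I d)"
  unfolding left_ideal_iff
proof (intro conjI ballI)
  show "additive_subgroup C (trailing_coeffs I d)"
    using I by (simp add: left_ideal_iff additive_subgroup_trailing_coeffs)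
next
  fix r x assume r: "r \<in> C" and "x \<in> trailing_coeffs I d"
  then obtain p where p: "p \<in> I" "x = p 0" "{j. p j \<noteq> 0} \<subseteq> {0..int d}"
    unfolding trailing_coeffs_def by blast
  have "skl_mult m s (laurent_monom 0 r) p \<in> I"
    using I p laurent_monom_mem[OF zero_mem r] by (simp add: left_ideal_def)
  then have "(\<lambda>l. m r (p l)) \<in> I"
    by (simp add: skl_mult_monom_left)
  moreover have "{j. m r (p j) \<noteq> 0} \<subseteq> {0..int d}"
    using p(3) mult_zero_right by fastforce
  ultimately have "(\<lambda>l. m r (p l)) 0 \<in> trailing_coeffs I d"
    by (rule trailing_coeffs_memI)
  then show "m r x \<in> trailing_coeffs I d"
    by (simp add: p(2))
qed

lemma right_ideal_trailing_coeffs: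
  assumes I: "right_ideal (laurent_carrier C) (skl_mult m s) I"
  shows "right_ideal C m (trailing_coeffs I d)"
  unfolding right_ideal_iff
proof (intro conjI ballI)
  show "additive_subgroup C (trailing_coeffs I d)"
    using I by (simp add: right_ideal_iff additive_subgroup_trailing_coeffs)
next
  fix r x assume r: "r \<in> C" and "x \<in> trailing_coeffs I d"
  then obtain p where p: "p \<in> I" "x = p 0" "{j. p j \<noteq> 0} \<subseteq> {0..int d}"
    unfolding trailing_coeffs_def by blast
  have "skl_mult m s p (laurent_monom 0 r) \<in> I"
    using I p laurent_monom_mem[OF zero_mem r] by (simp add: right_ideal_def)
  then have "(\<lambda>l. m (p l) (zpow s l r)) \<in> I"
    by (simp add: skl_mult_monom_right)
  moreover have "{j. m (p j) (zpow s j r) \<noteq> 0} \<subseteq> {0..int d}"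
    using p(3) mult_zero_left by fastforce
  ultimately have "(\<lambda>l. m (p l) (zpow s l r)) 0 \<in> trailing_coeffs I d"
    by (rule trailing_coeffs_memI)
  then show "m x r \<in> trailing_coeffs I d"
    by (simp add: p(2))
qed

lemma left_noetherian_laurent:
  assumes "left_noetherian C m"
  shows "left_noetherian (laurent_carrier C) (skl_mult m s)"
  unfolding left_noetherian_iff_ascending_chain_condition
proof (rule left.ascending_chain_condition_laurent)
  show "ascending_chain_condition (left_ideal C m)"
    using assms by (simp add: left_noetherian_iff_ascending_chain_condition)
  fix I assume I: "left_ideal (laurent_carrier C) (skl_mult m s) I"
  then show "additive_subgroup (laurent_carrier C) I"
    by (simp add: left_ideal_iff)
  show "left_ideal C m (trailing_coeffs I d)" for d
    using I by (rule left_ideal_trailing_coeffs)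
  show "left.shift k p \<in> I" if "p \<in> I" for p k
    using I that laurent_monom_mem[OF zero_mem unit_mem]
    by (auto simp: left_ideal_def left_shift_eq_skl_mult)
qed

lemma right_noetherian_laurent:
  assumes "right_noetherian C m"
  shows "right_noetherian (laurent_carrier C) (skl_mult m s)"
  unfolding right_noetherian_iff_ascending_chain_condition
proof (rule right.ascending_chain_condition_laurent)
  show "ascending_chain_condition (right_ideal C m)"
    using assms by (simp add: right_noetherian_iff_ascending_chain_condition)
  fix I assume I: "right_ideal (laurent_carrier C) (skl_mult m s) I"
  then show "additive_subgroup (laurent_carrier C) I"
    by (simp add: right_ideal_iff)
  show "right_ideal C m (trailing_coeffs I d)" for d
    using I by (rule right_ideal_trailing_coeffs)
  show "right.shift k p \<in> I" if "p \<in> I" for p k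
    using I that laurent_monom_mem[OF zero_mem unit_mem]
    by (auto simp: right_ideal_def right_shift_eq_skl_mult)
qed

end

lemma nonassoc_ring_mult_zero:
  assumes "nonassoc_ring m one"
  shows "m 0 x = 0" and "m x 0 = 0"
  using assms unfolding nonassoc_ring_def by (metis add_cancel_right_left)+

lemma additive_zero: "additive s \<Longrightarrow> s 0 = 0"
  unfolding additive_def by (metis add_cancel_right_left)

fun lone :: "'a::zero \<Rightarrow> nat \<Rightarrow> int list \<Rightarrow> 'a" where
  "lone e 0 = (\<lambda>xs. if xs = [] then e else 0)"
| "lone e (Suc i) = lenc i (laurent_monom 0 (lone e i))"

lemma lcarrier_zero: "0 \<in> lcarrier i"
  by (simp add: lcarrier_def)

lemma lcarrier_add:
  fixes F G :: "int list \<Rightarrow> 'a::monoid_add"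
  assumes "F \<in> lcarrier i" "G \<in> lcarrier i"
  shows "F + G \<in> lcarrier i"
proof -
  have "{xs. (F + G) xs \<noteq> 0} \<subseteq> {xs. F xs \<noteq> 0} \<union> {xs. G xs \<noteq> 0}" by auto
  then have "finite {xs. (F + G) xs \<noteq> 0}"
    using assms by (simp add: lcarrier_def finite_subset)
  moreover have "length xs = i" if "(F + G) xs \<noteq> 0" for xs
    using assms that by (auto simp: lcarrier_def) (metis add.right_neutral)
  ultimately show ?thesis
    by (simp add: lcarrier_def)
qed

lemma ldec_mem:
  assumes F: "F \<in> lcarrier (Suc i)"
  shows "ldec i F \<in> laurent_carrier (lcarrier i)"
proof -
  have fin: "finite {ys. F ys \<noteq> 0}"
    using F by (simp add: lcarrier_def)
  have "{xs. ldec i F j xs \<noteq> 0} \<subseteq> butlast ` {ys. F ys \<noteq> 0}" for j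
  proof
    fix xs assume "xs \<in> {xs. ldec i F j xs \<noteq> 0}"
    then have "F (xs @ [j]) \<noteq> 0" by (auto simp: ldec_def split: if_splits)
    then show "xs \<in> butlast ` {ys. F ys \<noteq> 0}" by (intro image_eqI[of _ _ "xs @ [j]"]) auto
  qed
  then have "finite {xs. ldec i F j xs \<noteq> 0}" for j
    using fin by (meson finite_imageI finite_subset)
  then have "ldec i F j \<in> lcarrier i" for j
    by (simp add: lcarrier_def ldec_def)
  moreover have "{j. ldec i F j \<noteq> 0} \<subseteq> last ` {ys. F ys \<noteq> 0}"
  proof
    fix j assume "j \<in> {j. ldec i F j \<noteq> 0}"
    then obtain xs where "F (xs @ [j]) \<noteq> 0" by (auto simp: ldec_def fun_eq_iff split: if_splits)
    then show "j \<in> last ` {ys. F ys \<noteq> 0}" by (intro image_eqI[of _ _ "xs @ [j]"]) auto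
  qed
  then have "finite {j. ldec i F j \<noteq> 0}"
    using fin by (meson finite_imageI finite_subset)
  ultimately show ?thesis
    by (simp add: laurent_carrier_def)
qed

lemma lenc_mem:
  assumes H: "H \<in> laurent_carrier (lcarrier i)"
  shows "lenc i H \<in> lcarrier (Suc i)"
proof -
  have "{ys. lenc i H ys \<noteq> 0} \<subseteq> (\<lambda>(j, xs). xs @ [j]) ` (SIGMA j:{j. H j \<noteq> 0}. {xs. H j xs \<noteq> 0})"
  proof
    fix ys assume "ys \<in> {ys. lenc i H ys \<noteq> 0}"
    then have "length ys = Suc i" and h: "H (last ys) (butlast ys) \<noteq> 0"
      by (auto simp: lenc_def split: if_splits)
    then have "ys = butlast ys @ [last ys]"
      by (metis append_butlast_last_id length_greater_0_conv zero_less_Suc)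
    with h show "ys \<in> (\<lambda>(j, xs). xs @ [j]) ` (SIGMA j:{j. H j \<noteq> 0}. {xs. H j xs \<noteq> 0})"
      by (intro image_eqI[of _ _ "(last ys, butlast ys)"]) auto
  qed
  moreover have "finite (SIGMA j:{j. H j \<noteq> 0}. {xs. H j xs \<noteq> 0})"
    using H by (intro finite_SigmaI) (auto simp: laurent_carrier_def lcarrier_def)
  ultimately have "finite {ys. lenc i H ys \<noteq> 0}"
    by (meson finite_imageI finite_subset)
  then show ?thesis
    by (auto simp: lcarrier_def lenc_def)
qed

lemma lenc_ldec: "F \<in> lcarrier (Suc i) \<Longrightarrow> lenc i (ldec i F) = F"
proof
  fix ys assume F: "F \<in> lcarrier (Suc i)"
  show "lenc i (ldec i F) ys = F ys"
  proof (cases "length ys = Suc i")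
    case True
    then have "ys = butlast ys @ [last ys]"
      by (metis append_butlast_last_id length_greater_0_conv zero_less_Suc)
    then show ?thesis using True by (simp add: lenc_def ldec_def)
  next
    case False
    then show ?thesis using F by (auto simp: lenc_def lcarrier_def)
  qed
qed

lemma ldec_lenc: "H \<in> laurent_carrier (lcarrier i) \<Longrightarrow> ldec i (lenc i H) = H"
  by (auto simp: fun_eq_iff ldec_def lenc_def laurent_carrier_def lcarrier_def)

lemma bij_betw_ldec: "bij_betw (ldec i) (lcarrier (Suc i)) (laurent_carrier (lcarrier i))"
  by (rule bij_betw_byWitness[where f' = "lenc i"])
    (auto simp: lenc_ldec ldec_lenc ldec_mem lenc_mem)

lemma ldec_add: "ldec i (F + G) = ldec i F + ldec i (G :: int list \<Rightarrow> 'a::monoid_add)"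
  by (auto simp: ldec_def fun_eq_iff)

lemma ldec_zero [simp]: "ldec i 0 = 0"
  by (auto simp: ldec_def fun_eq_iff)

lemma lenc_zero [simp]: "lenc i 0 = 0"
  by (auto simp: lenc_def fun_eq_iff)

lemma lone_values: "lone e i xs = 0 \<or> lone e i xs = e"
  by (induction i arbitrary: xs) (auto simp: lenc_def laurent_monom_def)

lemma lhat_lone:
  assumes "s 0 = 0" "s e = e"
  shows "lhat s (lone e i) = lone e i"
proof
  fix xs
  show "lhat s (lone e i) xs = lone e i xs"
    using lone_values[of e i xs] assms by (auto simp: lhat_def)
qed

lemma lhat_inverse: "bij s \<Longrightarrow> lhat (inv s) (lhat s F) = F" "bij s \<Longrightarrow> lhat s (lhat (inv s) F) = F"
  by (simp_all add: lhat_def bij_is_inj bij_is_surj surj_f_inv_f)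

lemma bij_lhat: "bij s \<Longrightarrow> bij (lhat s)"
  by (rule o_bij[where g = "lhat (inv s)"]) (simp_all add: fun_eq_iff lhat_inverse)

lemma lhat_zero: "s 0 = 0 \<Longrightarrow> lhat s 0 = 0"
  by (simp add: lhat_def fun_eq_iff)

lemma lhat_mem:
  assumes "s 0 = 0" "F \<in> lcarrier i"
  shows "lhat s F \<in> lcarrier i"
proof -
  have "{xs. lhat s F xs \<noteq> 0} \<subseteq> {xs. F xs \<noteq> 0}"
    using assms(1) by (auto simp: lhat_def)
  then have "finite {xs. lhat s F xs \<noteq> 0}"
    using assms(2) finite_subset by (auto simp: lcarrier_def)
  moreover have "F xs \<noteq> 0" if "lhat s F xs \<noteq> 0" for xs
    using assms(1) that by (auto simp: lhat_def)
  ultimately show ?thesis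
    using assms(2) by (auto simp: lcarrier_def)
qed

lemma lhat_image:
  assumes "bij s" "s 0 = 0"
  shows "lhat s ` lcarrier i = lcarrier i"
proof
  show "lhat s ` lcarrier i \<subseteq> lcarrier i"
    using lhat_mem[of s] assms(2) by blast
  have "inv s 0 = 0"
    using assms by (metis bij_is_inj inv_f_f)
  then show "lcarrier i \<subseteq> lhat s ` lcarrier i"
    using lhat_inverse(2)[OF assms(1)] lhat_mem[of "inv s"] by (metis image_eqI subsetI)
qed

context
  fixes m :: "'a::ab_group_add \<Rightarrow> 'a \<Rightarrow> 'a" and \<sigma> :: "nat \<Rightarrow> 'a \<Rightarrow> 'a" and one :: 'a
begin

lemma skew_laurent_lhat:
  assumes "unital_magma (lcarrier i) (lmult m \<sigma> i) (lone one i)"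
    and "bij s" "s 0 = 0" "s one = one"
  shows "skew_laurent (lcarrier i) (lmult m \<sigma> i) (lone one i) (lhat s)"
  using assms
  by (intro skew_laurent.intro skew_laurent_axioms.intro)
    (simp_all add: bij_lhat lhat_image lhat_lone lhat_zero)

context
  fixes i :: nat
  assumes level: "skew_laurent (lcarrier i) (lmult m \<sigma> i) (lone one i) (lhat (\<sigma> i))"
begin

interpretation level: skew_laurent "lcarrier i" "lmult m \<sigma> i" "lone one i" "lhat (\<sigma> i)"
  by (rule level)

lemma ldec_lmult:
  assumes "F \<in> lcarrier (Suc i)" "G \<in> lcarrier (Suc i)"
  shows "ldec i (lmult m \<sigma> (Suc i) F G) =
    skl_mult (lmult m \<sigma> i) (lhat (\<sigma> i)) (ldec i F) (ldec i G)"
  using assms by (simp add: ldec_lenc level.skl_mult_mem ldec_mem)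

lemma unital_magma_lcarrier_Suc:
  "unital_magma (lcarrier (Suc i)) (lmult m \<sigma> (Suc i)) (lone one (Suc i))"
proof -
  interpret laurent: unital_magma "laurent_carrier (lcarrier i)"
    "skl_mult (lmult m \<sigma> i) (lhat (\<sigma> i))" "laurent_monom 0 (lone one i)"
    by (rule level.unital_magma_laurent)
  have unit: "ldec i (lone one (Suc i)) = laurent_monom 0 (lone one i)"
    using laurent.unit_mem by (simp add: ldec_lenc)
  show ?thesis
  proof
    fix F G :: "int list \<Rightarrow> 'a" assume "F \<in> lcarrier (Suc i)" "G \<in> lcarrier (Suc i)"
    then show "F + G \<in> lcarrier (Suc i)" "lmult m \<sigma> (Suc i) F G \<in> lcarrier (Suc i)"
      by (simp_all add: lcarrier_add lenc_mem laurent.mult_mem ldec_mem)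
  next
    fix F :: "int list \<Rightarrow> 'a" assume F: "F \<in> lcarrier (Suc i)"
    show "lmult m \<sigma> (Suc i) (lone one (Suc i)) F = F" "lmult m \<sigma> (Suc i) F (lone one (Suc i)) = F"
      using F by (simp_all only: lmult.simps unit laurent.mult_unit_left laurent.mult_unit_right
          ldec_mem lenc_ldec)
  qed (simp_all add: lcarrier_zero lenc_mem laurent.unit_mem laurent.mult_zero_left
      laurent.mult_zero_right)
qed

lemma left_noetherian_lcarrier_Suc:
  assumes "left_noetherian (lcarrier i) (lmult m \<sigma> i)"
  shows "left_noetherian (lcarrier (Suc i)) (lmult m \<sigma> (Suc i))"
proof (rule left_noetherian_transfer[OF bij_betw_ldec,
      where m' = "skl_mult (lmult m \<sigma> i) (lhat (\<sigma> i))"])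
  show "ldec i (F + G) = ldec i F + ldec i G" for F G :: "int list \<Rightarrow> 'a"
    by (rule ldec_add)
  show "ldec i (lmult m \<sigma> (Suc i) F G) =
      skl_mult (lmult m \<sigma> i) (lhat (\<sigma> i)) (ldec i F) (ldec i G)"
    if "F \<in> lcarrier (Suc i)" "G \<in> lcarrier (Suc i)" for F G
    using that by (rule ldec_lmult)
  show "left_noetherian (laurent_carrier (lcarrier i)) (skl_mult (lmult m \<sigma> i) (lhat (\<sigma> i)))"
    using assms by (rule level.left_noetherian_laurent)
qed

lemma right_noetherian_lcarrier_Suc:
  assumes "right_noetherian (lcarrier i) (lmult m \<sigma> i)"
  shows "right_noetherian (lcarrier (Suc i)) (lmult m \<sigma> (Suc i))"
proof (rule right_noetherian_transfer[OF bij_betw_ldec,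
      where m' = "skl_mult (lmult m \<sigma> i) (lhat (\<sigma> i))"])
  show "ldec i (F + G) = ldec i F + ldec i G" for F G :: "int list \<Rightarrow> 'a"
    by (rule ldec_add)
  show "ldec i (lmult m \<sigma> (Suc i) F G) =
      skl_mult (lmult m \<sigma> i) (lhat (\<sigma> i)) (ldec i F) (ldec i G)"
    if "F \<in> lcarrier (Suc i)" "G \<in> lcarrier (Suc i)" for F G
    using that by (rule ldec_lmult)
  show "right_noetherian (laurent_carrier (lcarrier i)) (skl_mult (lmult m \<sigma> i) (lhat (\<sigma> i)))"
    using assms by (rule level.right_noetherian_laurent)
qed

end

end

lemma lcarrier_0: "lcarrier 0 = {F. \<forall>xs. xs \<noteq> [] \<longrightarrow> F xs = 0}"
proof -
  have "finite {xs. F xs \<noteq> 0}" if "\<forall>xs. xs \<noteq> [] \<longrightarrow> F xs = 0" for F :: "int list \<Rightarrow> 'a"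
  proof (rule finite_subset)
    show "{xs. F xs \<noteq> 0} \<subseteq> {[]}" using that by auto
  qed simp
  then show ?thesis
    by (auto simp: lcarrier_def)
qed

lemma bij_betw_lcarrier_0: "bij_betw (\<lambda>F. F []) (lcarrier 0) UNIV"
  by (rule bij_betw_byWitness[where f' = "\<lambda>a xs. if xs = [] then a else 0"])
    (auto simp: lcarrier_0 fun_eq_iff)

lemma unital_magma_lcarrier_0:
  assumes "nonassoc_ring m one"
  shows "unital_magma (lcarrier 0) (lmult m \<sigma> 0) (lone one 0)"
  using assms nonassoc_ring_mult_zero[OF assms]
  by unfold_locales (auto simp: lcarrier_0 nonassoc_ring_def fun_eq_iff)

lemma left_noetherian_lcarrier_0:
  "left_noetherian UNIV m \<Longrightarrow> left_noetherian (lcarrier 0) (lmult m \<sigma> 0)"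
  by (rule left_noetherian_transfer[OF bij_betw_lcarrier_0]) simp_all

lemma right_noetherian_lcarrier_0:
  "right_noetherian UNIV m \<Longrightarrow> right_noetherian (lcarrier 0) (lmult m \<sigma> 0)"
  by (rule right_noetherian_transfer[OF bij_betw_lcarrier_0]) simp_all

context
  fixes m :: "'a::ab_group_add \<Rightarrow> 'a \<Rightarrow> 'a" and \<sigma> :: "nat \<Rightarrow> 'a \<Rightarrow> 'a"
    and one :: 'a and n :: nat
  assumes ring: "nonassoc_ring m one"
    and automorphisms: "\<forall>i<n. bij (\<sigma> i) \<and> additive (\<sigma> i) \<and> \<sigma> i one = one"
begin

lemma automorphism_props:
  assumes "i < n"
  shows "bij (\<sigma> i)" and "\<sigma> i 0 = 0" and "\<sigma> i one = one"
  using automorphisms assms additive_zero by blast+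

lemma unital_magma_levels: "i \<le> n \<Longrightarrow> unital_magma (lcarrier i) (lmult m \<sigma> i) (lone one i)"
proof (induction i)
  case 0
  show ?case using ring by (rule unital_magma_lcarrier_0)
next
  case (Suc i)
  then have "skew_laurent (lcarrier i) (lmult m \<sigma> i) (lone one i) (lhat (\<sigma> i))"
    using automorphism_props[of i] by (intro skew_laurent_lhat) auto
  then show ?case by (rule unital_magma_lcarrier_Suc)
qed

lemma skew_laurent_levels:
  "i < n \<Longrightarrow> skew_laurent (lcarrier i) (lmult m \<sigma> i) (lone one i) (lhat (\<sigma> i))"
  using unital_magma_levels automorphism_props[of i] by (intro skew_laurent_lhat) auto

lemma noetherian_levels:
  "i \<le> n \<Longrightarrow>
    (left_noetherian UNIV m \<longrightarrow> left_noetherian (lcarrier i) (lmult m \<sigma> i)) \<and>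
    (right_noetherian UNIV m \<longrightarrow> right_noetherian (lcarrier i) (lmult m \<sigma> i))"
proof (induction i)
  case 0
  then show ?case
    using left_noetherian_lcarrier_0 right_noetherian_lcarrier_0 by blast
next
  case (Suc i)
  then have level: "skew_laurent (lcarrier i) (lmult m \<sigma> i) (lone one i) (lhat (\<sigma> i))"
    by (intro skew_laurent_levels) simp
  show ?case
    using Suc left_noetherian_lcarrier_Suc[OF level] right_noetherian_lcarrier_Suc[OF level]
    by (simp del: lmult.simps)
qed

end

theorem corollary11:
  fixes m :: "'a::ab_group_add \<Rightarrow> 'a \<Rightarrow> 'a" and one :: 'a
    and \<sigma> :: "nat \<Rightarrow> 'a \<Rightarrow> 'a" and n :: nat
  assumes "nonassoc_ring m one"
    and "n \<ge> 1"
    and "\<forall>i<n. bij (\<sigma> i) \<and> additive (\<sigma> i) \<and> \<sigma> i one = one"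
    and "\<forall>i<n. \<forall>j<n. \<sigma> i \<circ> \<sigma> j = \<sigma> j \<circ> \<sigma> i"
  shows "(left_noetherian (UNIV :: 'a set) m \<longrightarrow> left_noetherian (lcarrier n) (lmult m \<sigma> n)) \<and>
         (right_noetherian (UNIV :: 'a set) m \<longrightarrow> right_noetherian (lcarrier n) (lmult m \<sigma> n))"
  using noetherian_levels[OF assms(1,3) order_refl] .

end
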